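(* The set $\mathcal A_1$ with the operation $\circ$ is a non-Abelian semigroup. That is: (i) if $\mathbf a,\mathbf b\in\mathcal A_1$, then $\mathbf a\circ\mathbf b\in\mathcal A_1$; (ii) for all $\mathbf a,\mathbf b,\mathbf c\in\mathcal A_1$, $(\mathbf a\circ\mathbf b)\circ\mathbf c=\mathbf a\circ(\mathbf b\circ\mathbf c)$; and the operation is not commutative.
   Context: Binary words are ordered lexicographically, with $\mathbf c\prec\mathbf d$ iff $\mathbf c0^\infty\prec\mathbf d0^\infty$. Word operations. For a binary word $c_1\dots c_k$: - if $c_k=0$, then $c_1\dots c_k^+=c_1\dots c_{k-1}1$; - the reflection is $\overline{c_1\dots c_k}=(1-c_1)\dots(1-c_k)$. Fundamental words. A binary word $a_1\dots a_m$ with $m\ge2$ is fundamental if $\overline{a_1\dots a_{m-i}}\preceq a_{i+1}\dots a_m\prec a_1\dots a_{m-i}$ for all $1\le i<m$. $\mathcal A_1$ is the set of such words; they all begin with $1$. The graph. For $\mathbf a\in\mathcal A_1$, let $G$ have vertices Start, $A$, $B$ and edges - $e_0$: Start$\to A$, - $e_1$: $A\to B$, - $e_2$: $B\to B$, - $e_3$: $B\to A$, - $e_4$: $A\to A$. It carries two labelings: - $\mathcal L_{\mathbf a}$: $e_0,e_3\mapsto\mathbf a^+$; $e_1\mapsto\overline{\mathbf a^+}$; $e_2\mapsto\mathbf a$; $e_4\mapsto\overline{\mathbf a}$; - $\mathcal L^*$: $e_0,e_3,e_4\mapsto1$; $e_1,e_2\mapsto0$. The map $\Phi_{\mathbf a}$.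 For a path $e_{i_1}\dots e_{i_k}$ with $i_1=0$, set $\Phi_{\mathbf a}(\mathcal L_{\mathbf a}(e_{i_1})\cdots\mathcal L_{\mathbf a}(e_{i_k}))=\mathcal L^*(e_{i_1}\dots e_{i_k})$. This is a bijection from such block words onto binary words beginning with $1$. Composition. $\mathbf a\circ\mathbf b:=\Phi_{\mathbf a}^{-1}(\mathbf b)$, a word of length $|\mathbf a||\mathbf b|$. For example, $10\circ110=110100$ while $110\circ10=111000$. *)

theory Defs
  imports Main
begin

text \<open>Binary words are lists of booleans; True stands for the letter 1, False for 0.\<close>

type_synonym word = "bool list"

definition pad :: "word \<Rightarrow> nat \<Rightarrow> bool" where
  "pad c n = (if n < length c then c ! n else False)"

definition word_less :: "word \<Rightarrow> word \<Rightarrow> bool" where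
  "word_less c d \<longleftrightarrow> (\<exists>k. (\<forall>i<k. pad c i = pad d i) \<and> \<not> pad c k \<and> pad d k)"

definition word_le :: "word \<Rightarrow> word \<Rightarrow> bool" where
  "word_le c d \<longleftrightarrow> word_less c d \<or> pad c = pad d"

definition refl_word :: "word \<Rightarrow> word" where
  "refl_word c = map Not c"

text \<open>The operation c^+ (replace the last letter 0 by 1); only applied to words ending in 0.\<close>
definition plus_word :: "word \<Rightarrow> word" where
  "plus_word c = butlast c @ [True]"

definition fundamental :: "word \<Rightarrow> bool" where
  "fundamental a \<longleftrightarrow> length a \<ge> 2 \<and>
     (\<forall>i. 1 \<le> i \<and> i < length a \<longrightarrow>
        word_le (refl_word (take (length a - i) a)) (drop i a) \<and>
        word_less (drop i a) (take (length a - i) a))"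

definition A1 :: "word set" where
  "A1 = {a. fundamental a}"

datatype vertex = VA | VB

text \<open>Following the path in G determined by the L*-labels (after the initial edge e0),
  and concatenating the L_a-labels of its edges:
  from A: letter 1 = e4 (A\<rightarrow>A, label refl a), letter 0 = e1 (A\<rightarrow>B, label refl a^+);
  from B: letter 0 = e2 (B\<rightarrow>B, label a), letter 1 = e3 (B\<rightarrow>A, label a^+).\<close>
fun phi_inv_from :: "word \<Rightarrow> vertex \<Rightarrow> word \<Rightarrow> word" where
  "phi_inv_from a v [] = []"
| "phi_inv_from a VA (x # xs) =
     (if x then refl_word a @ phi_inv_from a VA xs
      else refl_word (plus_word a) @ phi_inv_from a VB xs)"
| "phi_inv_from a VB (x # xs) =
     (if x then plus_word a @ phi_inv_from a VA xs
      else a @ phi_inv_from a VB xs)"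

text \<open>a \<circ> b = \<Phi>_a^{-1}(b), for b beginning with 1 (the first letter 1 is the edge e0,
  labelled a^+, leading to A).\<close>
definition compose :: "word \<Rightarrow> word \<Rightarrow> word" where
  "compose a b = plus_word a @ phi_inv_from a VA (tl b)"

lemma "compose [True, False] [True, True, False] = [True,True,False,True,False,False]"
  by (simp add: compose_def plus_word_def refl_word_def)
lemma "compose [True, True, False] [True, False] = [True,True,True,False,False,False]"
  by (simp add: compose_def plus_word_def refl_word_def)

end

theory Submission
  imports Defs "HOL-Library.List_Lexorder"
begin

(* Write m = |a|, n = |b| and number letters from 1, with a_0 = 0 (the last letter of a,
   extended periodically) and b_0 = 0. Reading off the labels of G along the path of b gives
   (a \<circ> b)_t = a_(t mod m) xor b_(t div m) for 0 \<le> t \<le> mn.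
   Associativity is then the identity (t mod mn) div m = (t div m) mod n.

   For closure, compare the suffix of a \<circ> b after position i = qm + r with the prefix of the
   same length. If r = 0 both consist of whole blocks, and comparing them blockwise reduces to
   the fundamental inequalities of b at shift q. If r > 0 the comparison is decided within the
   first m letters: the prefix starts with a^+, the suffix with a rotation of a or a^+ whose two
   pieces may be reflected, and the inequalities of a at shifts r and m - r place this window
   strictly between the reflection of a^+ and a^+. *)

section \<open>Lexicographic order on words of equal length\<close>

lemma append_less_append_iff:
  fixes u v :: "'a::order list"
  assumes "length u = length v"
  shows "u @ x < v @ y \<longleftrightarrow> u < v \<or> u = v \<and> x < y"
  using assms by (induction u v rule: list_induct2) auto

lemma append_less_append_if_less:
  fixes u v :: "'a::order list"
  shows "length u = length v \<Longrightarrow> u < v \<Longrightarrow> u @ x < v @ y"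
  by (simp add: append_less_append_iff)

lemma append_less_append_if_le:
  fixes u v :: "'a::order list"
  shows "length u = length v \<Longrightarrow> u \<le> v \<Longrightarrow> x < y \<Longrightarrow> u @ x < v @ y"
  by (auto simp: append_less_append_iff order_le_less)

lemma less_if_take_less:
  fixes xs ys :: "'a::order list"
  assumes "length xs = length ys" and "take k xs < take k ys"
  shows "xs < ys"
  using assms append_less_append_iff[of "take k xs" "take k ys" "drop k xs" "drop k ys"]
  by simp

lemma map_Not_less_map_Not_iff:
  "length xs = length ys \<Longrightarrow> map Not xs < map Not ys \<longleftrightarrow> ys < xs"
  by (induction xs ys rule: list_induct2) auto

lemma map_Not_le_map_Not_iff:
  "length xs = length ys \<Longrightarrow> map Not xs \<le> map Not ys \<longleftrightarrow> ys \<le> xs"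
  by (auto simp: order_le_less map_Not_less_map_Not_iff inj_map_eq_map inj_def)

lemma snoc_True_le_if_snoc_False_less:
  assumes "length y = Suc (length x)" and "x @ [False] < y"
  shows "x @ [True] \<le> y"
proof -
  obtain y' e where y: "y = y' @ [e]" and len: "length y' = length x"
    using assms(1) by (cases y rule: rev_cases) auto
  then have "x < y' \<or> x = y' \<and> e"
    using assms(2) by (simp add: append_less_append_iff less_bool_def)
  then show ?thesis
    using y len by (auto simp: order_le_less append_less_append_iff)
qed

lemma pad_Cons: "pad (x # c) 0 = x" "pad (x # c) (Suc i) = pad c i"
  by (simp_all add: pad_def)

lemma word_less_Cons_Cons:
  "word_less (x # c) (y # d) \<longleftrightarrow> \<not> x \<and> y \<or> x = y \<and> word_less c d"
proof
  assume "word_less (x # c) (y # d)"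
  then obtain k where k: "\<forall>i<k. pad (x # c) i = pad (y # d) i" "\<not> pad (x # c) k" "pad (y # d) k"
    unfolding word_less_def by blast
  show "\<not> x \<and> y \<or> x = y \<and> word_less c d"
  proof (cases k)
    case 0
    with k show ?thesis by (simp add: pad_Cons)
  next
    case (Suc k')
    with k have "x = y" "word_less c d"
      unfolding word_less_def using pad_Cons by (metis zero_less_Suc, metis Suc_mono)
    then show ?thesis by blast
  qed
next
  assume "\<not> x \<and> y \<or> x = y \<and> word_less c d"
  then show "word_less (x # c) (y # d)"
  proof
    assume "\<not> x \<and> y"
    then show ?thesis unfolding word_less_def by (intro exI[of _ 0]) (simp add: pad_Cons)
  next
    assume "x = y \<and> word_less c d"
    then obtain k where "x = y" "\<forall>i<k. pad c i = pad d i" "\<not> pad c k" "pad d k"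
      unfolding word_less_def by blast
    then show ?thesis unfolding word_less_def
      by (intro exI[of _ "Suc k"]) (auto simp: pad_Cons less_Suc_eq_0_disj)
  qed
qed

lemma word_less_iff_less: "length c = length d \<Longrightarrow> word_less c d \<longleftrightarrow> c < d"
proof (induction c d rule: list_induct2)
  case Nil
  show ?case by (simp add: word_less_def pad_def)
next
  case (Cons x c y d)
  then show ?case by (auto simp: word_less_Cons_Cons less_bool_def)
qed

lemma pad_eq_iff_eq:
  assumes "length c = length d"
  shows "pad c = pad d \<longleftrightarrow> c = d"
proof
  assume "pad c = pad d"
  then have "pad c i = pad d i" for i
    by simp
  then have "c ! i = d ! i" if "i < length c" for i
    using that assms unfolding pad_def by metis
  with assms show "c = d" by (simp add: nth_equalityI)
qed simp

lemma word_le_iff_le: "length c = length d \<Longrightarrow> word_le c d \<longleftrightarrow> c \<le> d"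
  by (simp add: word_le_def word_less_iff_less pad_eq_iff_eq order_le_less)

definition suffix_bounded :: "word \<Rightarrow> nat \<Rightarrow> bool" where
  "suffix_bounded w i \<longleftrightarrow>
     map Not (take (length w - i) w) \<le> drop i w \<and> drop i w < take (length w - i) w"

lemma fundamental_iff_suffix_bounded:
  "fundamental w \<longleftrightarrow> 2 \<le> length w \<and> (\<forall>i. 0 < i \<and> i < length w \<longrightarrow> suffix_bounded w i)"
  unfolding fundamental_def refl_word_def suffix_bounded_def
  by (simp add: word_le_iff_le word_less_iff_less Suc_le_eq)

section \<open>Words as letter functions\<close>

(* Letters are numbered from 1. The junk value letter w 0 = False serves as b_0 = 0 in the block
   formula, and as the last letter a_m = 0 of a when t mod m = 0. *)

definition letter :: "word \<Rightarrow> nat \<Rightarrow> bool" where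
  "letter w t = (False # w) ! t"

definition word_of :: "(nat \<Rightarrow> bool) \<Rightarrow> nat \<Rightarrow> word" where
  "word_of f l = map (\<lambda>t. f (Suc t)) [0..<l]"

lemma letter_0 [simp]: "letter w 0 = False"
  and letter_Suc [simp]: "letter w (Suc t) = w ! t"
  by (simp_all add: letter_def)

lemma word_of_0 [simp]: "word_of f 0 = []"
  by (simp add: word_of_def)

lemma length_word_of [simp]: "length (word_of f l) = l"
  by (simp add: word_of_def)

lemma nth_word_of [simp]: "j < l \<Longrightarrow> word_of f l ! j = f (Suc j)"
  by (simp add: word_of_def)

lemma word_of_letter: "word_of (letter w) (length w) = w"
  by (simp add: word_of_def map_nth)

lemma letter_word_of: "0 < t \<Longrightarrow> t \<le> l \<Longrightarrow> letter (word_of f l) t = f t"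
  by (cases t) simp_all

lemma word_of_cong: "(\<And>t. 0 < t \<Longrightarrow> t \<le> l \<Longrightarrow> f t = g t) \<Longrightarrow> word_of f l = word_of g l"
  by (simp add: word_of_def Suc_le_eq)

lemma word_of_Suc: "word_of f (Suc l) = f 1 # word_of (\<lambda>t. f (Suc t)) l"
  by (rule nth_equalityI) (simp_all add: nth_Cons split: nat.split)

lemma word_of_snoc: "word_of f (Suc l) = word_of f l @ [f (Suc l)]"
  by (simp add: word_of_def)

lemma word_of_add: "word_of f (k + l) = word_of f k @ word_of (\<lambda>t. f (k + t)) l"
  by (rule nth_equalityI) (auto simp: nth_append)

lemma take_word_of: "k \<le> l \<Longrightarrow> take k (word_of f l) = word_of f k"
  by (rule nth_equalityI) simp_all

lemma drop_word_of: "drop k (word_of f l) = word_of (\<lambda>t. f (k + t)) (l - k)"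
  by (rule nth_equalityI) simp_all

lemma map_word_of: "map g (word_of f l) = word_of (\<lambda>t. g (f t)) l"
  by (simp add: word_of_def)

lemma take_eq_word_of: "k \<le> length w \<Longrightarrow> take k w = word_of (letter w) k"
  by (metis take_word_of word_of_letter)

lemma drop_eq_word_of: "drop k w = word_of (\<lambda>t. letter w (k + t)) (length w - k)"
  by (metis drop_word_of word_of_letter)

definition framed :: "word \<Rightarrow> bool" where
  "framed w \<longleftrightarrow> w \<noteq> [] \<and> hd w \<and> \<not> last w"

lemma framed_length: "framed w \<Longrightarrow> 2 \<le> length w"
  unfolding framed_def by (cases w rule: rev_cases) (auto simp: hd_append Suc_le_eq split: if_splits)

lemma framed_iff_letter: "framed w \<longleftrightarrow> 0 < length w \<and> letter w 1 \<and> \<not> letter w (length w)"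
proof (cases w rule: rev_cases)
  case (snoc ys y)
  then show ?thesis
    by (cases ys) (simp_all add: framed_def nth_append letter_def)
qed (simp add: framed_def)

lemma framed_butlast: "framed w \<Longrightarrow> w = butlast w @ [False]"
  unfolding framed_def by (metis append_butlast_last_id)

lemma length_plus_word: "a \<noteq> [] \<Longrightarrow> length (plus_word a) = length a"
  by (simp add: plus_word_def)

lemma fundamental_framed:
  assumes "fundamental w"
  shows "framed w"
proof -
  let ?l = "length w"
  have l: "2 \<le> ?l" and "\<forall>i. 0 < i \<and> i < ?l \<longrightarrow> suffix_bounded w i"
    using assms by (simp_all add: fundamental_iff_suffix_bounded)
  then have "suffix_bounded w (?l - 1)" by simp
  moreover have "drop (?l - 1) w = [letter w ?l]" "take 1 w = [letter w 1]"
    using l by (simp_all add: drop_eq_word_of take_eq_word_of word_of_Suc)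
  moreover have "?l - (?l - 1) = 1" using l by simp
  ultimately show ?thesis
    using l by (auto simp: suffix_bounded_def framed_iff_letter less_bool_def)
qed

section \<open>The composition as a block substitution\<close>

(* expand a c k is the inverse of Phi_a applied to the letters c 1, ..., c k, starting in vertex A
   if c 0 and in B otherwise: block u is a with its first |a| - 1 letters reflected if c u, and
   its last letter replaced by c (Suc u). *)

definition expand :: "word \<Rightarrow> (nat \<Rightarrow> bool) \<Rightarrow> nat \<Rightarrow> word" where
  "expand a c k = word_of (\<lambda>t. letter a (t mod length a) \<noteq> c (t div length a)) (k * length a)"

lemma length_expand [simp]: "length (expand a c k) = k * length a"
  by (simp add: expand_def)

lemma expand_Suc:
  assumes "framed a"
  shows "expand a c (Suc k) = map ((\<noteq>) (c 0)) (butlast a) @ c 1 # expand a (\<lambda>u. c (Suc u)) k"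
proof -
  let ?m = "length a" and ?f = "\<lambda>t. letter a (t mod length a) \<noteq> c (t div length a)"
  have m: "2 \<le> ?m" using framed_length[OF assms] .
  then have m1: "Suc (?m - 1) = ?m" and m0: "?m \<noteq> 0" by auto
  have "expand a c (Suc k) = word_of ?f ?m @ word_of (\<lambda>t. ?f (?m + t)) (k * ?m)"
    by (simp add: expand_def word_of_add)
  also have "word_of ?f ?m = word_of ?f (?m - 1) @ [?f ?m]"
    using word_of_snoc[of ?f "?m - 1"] unfolding m1 by simp
  also have "word_of ?f (?m - 1) = map ((\<noteq>) (c 0)) (butlast a)"
    using m by (intro nth_equalityI) (auto simp: nth_butlast)
  also have "word_of (\<lambda>t. ?f (?m + t)) (k * ?m) = expand a (\<lambda>u. c (Suc u)) k"
    using m0 unfolding expand_def by (intro word_of_cong) (simp add: div_add_self1)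
  finally show ?thesis using m0 by simp
qed

lemma expand_cong:
  assumes "\<And>u. u \<le> k \<Longrightarrow> c u = d u"
  shows "expand a c k = expand a d k"
  unfolding expand_def
proof (rule word_of_cong)
  fix t assume "t \<le> k * length a"
  then have "t div length a \<le> k"
    by (metis div_le_mono div_by_0 le0 nonzero_mult_div_cancel_right)
  with assms show "(letter a (t mod length a) \<noteq> c (t div length a)) =
      (letter a (t mod length a) \<noteq> d (t div length a))" by simp
qed

lemma phi_inv_from_Cons:
  assumes "framed a"
  shows "phi_inv_from a v (x # xs) =
    map ((\<noteq>) (v = VA)) (butlast a) @ x # phi_inv_from a (if x then VA else VB) xs"
proof -
  obtain a' where "a = a' @ [False]"
    using framed_butlast[OF assms] by blast
  then show ?thesis
    by (cases v; cases x) (simp_all add: refl_word_def plus_word_def)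
qed

lemma phi_inv_from_eq_expand:
  "framed a \<Longrightarrow> phi_inv_from a v xs = expand a (\<lambda>u. ((v = VA) # xs) ! u) (length xs)"
proof (induction xs arbitrary: v)
  case Nil
  then show ?case by (simp add: expand_def)
next
  case (Cons x xs)
  then show ?case by (simp add: phi_inv_from_Cons expand_Suc)
qed

lemma compose_eq_expand:
  assumes "framed a" and "b \<noteq> []" and "hd b"
  shows "compose a b = expand a (letter b) (length b)"
proof -
  obtain b' where "b = True # b'"
    using assms(2,3) by (cases b) auto
  then have "compose a b = phi_inv_from a VB b"
    by (simp add: compose_def)
  then show ?thesis
    using phi_inv_from_eq_expand[OF assms(1)] by (simp add: letter_def[abs_def])
qed

lemma length_compose:
  "framed a \<Longrightarrow> framed b \<Longrightarrow> length (compose a b) = length a * length b"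
  by (simp add: compose_eq_expand framed_def)

lemma letter_compose:
  assumes "framed a" and "framed b" and "t \<le> length a * length b"
  shows "letter (compose a b) t = (letter a (t mod length a) \<noteq> letter b (t div length a))"
proof (cases "t = 0")
  case False
  with assms show ?thesis
    by (simp add: compose_eq_expand framed_def expand_def letter_word_of mult.commute)
qed simp

lemma take_compose:
  assumes "framed a" and "k \<le> length a"
  shows "take k (compose a b) = take k (plus_word a)"
  using assms by (simp add: compose_def framed_def length_plus_word)

lemma drop_compose:
  assumes "framed a" and "framed b" and "q \<le> length b"
  shows "drop (q * length a) (compose a b) = expand a (\<lambda>u. letter b (q + u)) (length b - q)"
proof -
  have "0 < length a" "b \<noteq> []" "hd b" using assms(1,2) by (simp_all add: framed_def)
  with assms show ?thesis
    by (auto simp: compose_eq_expand expand_def drop_word_of diff_mult_distrib intro!: word_of_cong)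
qed

lemma framed_compose:
  assumes "framed a" and "framed b"
  shows "framed (compose a b)"
proof -
  let ?m = "length a" and ?n = "length b"
  have m: "2 \<le> ?m" and n: "2 \<le> ?n" using assms by (simp_all add: framed_length)
  have ne: "a \<noteq> []" "b \<noteq> []" using assms by (simp_all add: framed_def)
  from m n have "1 \<le> ?m * ?n" "1 mod ?m = 1" "1 div ?m = 0"
    by (auto simp: Suc_le_eq)
  then have "letter (compose a b) 1 = (letter a 1 \<noteq> letter b 0)"
    using assms letter_compose[of a b 1] by simp
  moreover have "letter (compose a b) (?m * ?n) = (letter a 0 \<noteq> letter b ?n)"
    using assms ne letter_compose[of a b "?m * ?n"] by simp
  ultimately show ?thesis
    using assms m n by (simp add: framed_iff_letter length_compose)
qed

lemma compose_assoc:
  assumes "framed a" and "framed b" and "framed c"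
  shows "compose (compose a b) c = compose a (compose b c)"
proof -
  let ?m = "length a" and ?n = "length b" and ?k = "length c"
  have c: "c \<noteq> []" "hd c" and bc: "compose b c \<noteq> []" "hd (compose b c)"
    using assms framed_compose[OF assms(2,3)] by (simp_all add: framed_def)
  have "compose (compose a b) c = expand (compose a b) (letter c) ?k"
    using framed_compose[OF assms(1,2)] c by (rule compose_eq_expand)
  also have "\<dots> = word_of (\<lambda>t. letter (compose a b) (t mod (?m * ?n)) \<noteq> letter c (t div (?m * ?n)))
      (?k * (?m * ?n))"
    unfolding expand_def length_compose[OF assms(1,2)] ..
  also have "\<dots> = word_of (\<lambda>t. letter a (t mod ?m) \<noteq> letter (compose b c) (t div ?m)) (?k * (?m * ?n))"
  proof (rule word_of_cong)
    fix t assume "0 < t" and t: "t \<le> ?k * (?m * ?n)"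
    have m0: "0 < ?m" and n0: "0 < ?n" using assms(1,2) by (simp_all add: framed_def)
    have "t mod (?m * ?n) div ?m = t div ?m mod ?n"
      using m0 by (simp add: mod_mult2_eq)
    moreover have "t mod (?m * ?n) mod ?m = t mod ?m"
      by (simp add: mod_mod_cancel)
    moreover have "t mod (?m * ?n) \<le> ?m * ?n"
      using m0 n0 by (simp add: order_less_imp_le)
    moreover have "t div ?m \<le> ?n * ?k"
      using div_le_mono[OF t, of ?m] m0 by (simp add: ac_simps)
    ultimately show "(letter (compose a b) (t mod (?m * ?n)) \<noteq> letter c (t div (?m * ?n))) =
        (letter a (t mod ?m) \<noteq> letter (compose b c) (t div ?m))"
      using assms by (simp add: letter_compose div_mult2_eq) blast
  qed
  also have "\<dots> = expand a (letter (compose b c)) (?n * ?k)"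
    unfolding expand_def length_compose[OF assms(2,3)] by (simp add: ac_simps)
  also have "\<dots> = compose a (compose b c)"
    using assms(1) bc length_compose[OF assms(2,3)] by (simp add: compose_eq_expand)
  finally show ?thesis .
qed

section \<open>Closure of fundamental words under composition\<close>

lemma flip_butlast_less_iff:
  assumes "framed a"
  shows "map ((\<noteq>) x) (butlast a) @ u < map ((\<noteq>) y) (butlast a) @ v \<longleftrightarrow>
    x \<and> \<not> y \<or> x = y \<and> u < v"
proof -
  have "a = butlast a @ [False]" and "butlast a \<noteq> []" and "hd a"
    using assms framed_butlast[OF assms] framed_length[OF assms]
    by (auto simp: framed_def simp flip: length_greater_0_conv)
  then obtain r where "butlast a = True # r"
    by (cases "butlast a") auto
  then show ?thesis
    by (cases x; cases y) (simp_all add: append_less_append_iff)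
qed

lemma expand_less_expand_iff:
  assumes "framed a" and "0 < k"
  shows "expand a c k < expand a d k \<longleftrightarrow> c 0 \<and> \<not> d 0 \<or> c 0 = d 0 \<and> word_of c k < word_of d k"
  using assms(2)
proof (induction k arbitrary: c d rule: nat_induct_non_zero)
  case 1
  show ?case
    unfolding One_nat_def expand_Suc[OF assms(1)] flip_butlast_less_iff[OF assms(1)]
    by (simp add: word_of_Suc expand_def)
next
  case (Suc k)
  have "expand a c (Suc k) < expand a d (Suc k) \<longleftrightarrow> c 0 \<and> \<not> d 0 \<or>
      c 0 = d 0 \<and> c 1 # expand a (\<lambda>u. c (Suc u)) k < d 1 # expand a (\<lambda>u. d (Suc u)) k"
    unfolding expand_Suc[OF assms(1)] flip_butlast_less_iff[OF assms(1)] ..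
  also have "\<dots> \<longleftrightarrow> c 0 \<and> \<not> d 0 \<or>
      c 0 = d 0 \<and> c 1 # word_of (\<lambda>u. c (Suc u)) k < d 1 # word_of (\<lambda>u. d (Suc u)) k"
    using Suc.IH[of "\<lambda>u. c (Suc u)" "\<lambda>u. d (Suc u)"] by (auto simp: less_bool_def)
  finally show ?case
    by (simp only: word_of_Suc)
qed

lemma expand_le_expandI:
  assumes "framed a" and "0 < k"
    and "c 0 \<and> \<not> d 0 \<or> c 0 = d 0 \<and> word_of c k \<le> word_of d k"
  shows "expand a c k \<le> expand a d k"
proof (cases "c 0 = d 0 \<and> word_of c k = word_of d k")
  case True
  have "c u = d u" if "u \<le> k" for u
  proof (cases u)
    case (Suc u')
    with that True show ?thesis
      using nth_word_of[of u' k c] nth_word_of[of u' k d] by simp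
  qed (use True in simp)
  then have "expand a c k = expand a d k" by (rule expand_cong)
  then show ?thesis by simp
next
  case False
  with assms show ?thesis
    by (auto simp: expand_less_expand_iff order_le_less)
qed

lemma suffix_bounded_compose_aligned:
  assumes "fundamental a" and "fundamental b" and "0 < q" and "q < length b"
  shows "suffix_bounded (compose a b) (q * length a)"
proof -
  let ?m = "length a" and ?n = "length b"
  define k where "k = ?n - q"
  have fa: "framed a" and fb: "framed b"
    using assms(1,2) by (simp_all add: fundamental_framed)
  have k: "0 < k"
    using assms(4) by (simp add: k_def)
  have w: "compose a b = expand a (letter b) ?n"
    using fa fb by (simp add: compose_eq_expand framed_def)
  have len: "length (compose a b) - q * ?m = k * ?m"
    by (simp add: w k_def diff_mult_distrib)
  have S: "drop (q * ?m) (compose a b) = expand a (\<lambda>u. letter b (q + u)) k"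
    using drop_compose[OF fa fb] assms(4) by (simp add: k_def)
  have P: "take (k * ?m) (compose a b) = expand a (letter b) k"
    unfolding w expand_def using assms(4) by (simp add: take_word_of k_def)
  have nP: "map Not (take (k * ?m) (compose a b)) = expand a (\<lambda>u. \<not> letter b u) k"
    unfolding P expand_def map_word_of by simp
  have "suffix_bounded b q"
    using assms(2-4) by (simp add: fundamental_iff_suffix_bounded)
  then have b_ge: "word_of (\<lambda>u. \<not> letter b u) k \<le> word_of (\<lambda>u. letter b (q + u)) k"
    and b_less: "word_of (\<lambda>u. letter b (q + u)) k < word_of (letter b) k"
    by (simp_all add: suffix_bounded_def take_eq_word_of drop_eq_word_of map_word_of k_def)
  have "expand a (\<lambda>u. \<not> letter b u) k \<le> expand a (\<lambda>u. letter b (q + u)) k"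
    using fa k b_ge by (intro expand_le_expandI) simp_all
  moreover have "expand a (\<lambda>u. letter b (q + u)) k < expand a (letter b) k"
    using b_less by (simp add: expand_less_expand_iff[OF fa k])
  ultimately show ?thesis
    unfolding suffix_bounded_def len S nP unfolding P ..
qed

lemma fundamental_plus_word_bounds:
  assumes "fundamental a" and "0 < i" and "i < length a"
  shows "map Not (take (length a - i) a) < drop i (plus_word a)"
    and "drop i (plus_word a) \<le> take (length a - i) a"
proof -
  let ?p = "take (length a - i) a"
  obtain a' where a: "a = a' @ [False]"
    using framed_butlast[OF fundamental_framed[OF assms(1)]] by blast
  then have s: "drop i a = drop i a' @ [False]" and s': "drop i (plus_word a) = drop i a' @ [True]"
    using assms(3) by (simp_all add: plus_word_def)
  have "suffix_bounded a i"
    using assms by (simp add: fundamental_iff_suffix_bounded)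
  then have "map Not ?p \<le> drop i a' @ [False]" and "drop i a' @ [False] < ?p"
    using s by (simp_all add: suffix_bounded_def)
  moreover have "drop i a' @ [False] < drop i a' @ [True]"
    by (simp add: append_less_append_iff less_bool_def)
  moreover have "length ?p = Suc (length (drop i a'))"
    using assms(3) a by simp
  ultimately show "map Not ?p < drop i (plus_word a)" and "drop i (plus_word a) \<le> ?p"
    unfolding s' by (auto intro: order.strict_trans1 snoc_True_le_if_snoc_False_less)
qed

(* With sigma = b_q and beta = b_(q+1), h is the window of a \<circ> b at positions qm + r + 1, ..., (q+1)m,
   and appending the prefix of length r of a, reflected if beta, gives the window of length m. *)

lemma fundamental_rotation_bounds:
  fixes \<sigma> \<beta> :: bool
  assumes "fundamental a" and "0 < r" and "r < length a"
  defines "h \<equiv> map ((\<noteq>) \<sigma>) (drop r (if \<sigma> = \<beta> then a else plus_word a))"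
  shows "map Not (plus_word a) < h @ map ((\<noteq>) \<beta>) (take r a)"
    and "h @ map ((\<noteq>) \<beta>) (take r a) < plus_word a"
    and "\<not> \<beta> \<Longrightarrow> map Not (take (length a - r) a) \<le> h \<and> h < take (length a - r) a"
proof -
  let ?m = "length a"
  define p s s' t z' where "p = take (?m - r) a" and "s = drop r a" and "s' = drop r (plus_word a)"
    and "t = take r a" and "z' = drop (?m - r) (plus_word a)"
  have len: "length s = length p" "length s' = length p" "length z' = length t"
    using assms(3) by (simp_all add: p_def s_def s'_def t_def z'_def plus_word_def)
  have "suffix_bounded a r"
    using assms(1-3) by (simp add: fundamental_iff_suffix_bounded)
  then have D1: "map Not p \<le> s" "s < p"
    by (simp_all add: suffix_bounded_def p_def s_def)
  have D2: "map Not p < s'" "s' \<le> p"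
    using fundamental_plus_word_bounds[OF assms(1-3)] by (simp_all add: p_def s'_def)
  have D3: "map Not t < z'"
    using fundamental_plus_word_bounds(1)[OF assms(1), of "?m - r"] assms(2,3)
    by (simp add: t_def z'_def)
  then have D3': "map Not z' < t"
    using len map_Not_less_map_Not_iff[of z' "map Not t"] by (simp add: comp_def)
  have R: "map Not s \<le> p" "map Not p < map Not s" "map Not s' < p" "map Not p \<le> map Not s'"
    using D1 D2 len map_Not_le_map_Not_iff[of s "map Not p"] map_Not_less_map_Not_iff[of p s]
      map_Not_less_map_Not_iff[of s' "map Not p"] map_Not_le_map_Not_iff[of p s']
    by (simp_all add: comp_def)
  have "take (?m - r) (plus_word a) = p"
    using assms(2,3) by (simp add: p_def plus_word_def take_butlast)
  then have P: "plus_word a = p @ z'"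
    using append_take_drop_id[of "?m - r" "plus_word a"] by (simp add: z'_def)
  have "h = map ((\<noteq>) \<sigma>) (if \<sigma> = \<beta> then s else s')"
    by (simp add: h_def s_def s'_def)
  then show "map Not (plus_word a) < h @ map ((\<noteq>) \<beta>) (take r a)"
    and "h @ map ((\<noteq>) \<beta>) (take r a) < plus_word a"
    and "\<not> \<beta> \<Longrightarrow> map Not (take (length a - r) a) \<le> h \<and> h < take (length a - r) a"
    unfolding P t_def[symmetric] p_def[symmetric] map_append using D1 D2 D3 D3' R len
    by (cases \<sigma>; cases \<beta>; simp add: append_less_append_if_less append_less_append_if_le)+
qed

lemma drop_compose_inside_block:
  assumes "framed a" and "framed b" and "r < length a" and "q < length b"
  shows "drop (q * length a + r) (compose a b) =
    map ((\<noteq>) (letter b q)) (drop r (butlast a)) @ letter b (Suc q) #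
      expand a (\<lambda>u. letter b (Suc q + u)) (length b - Suc q)"
proof -
  have "length b - q = Suc (length b - Suc q)"
    using assms(4) by simp
  with assms show ?thesis
    by (simp add: add.commute[of "q * length a"] flip: drop_drop)
      (simp add: drop_compose expand_Suc drop_map)
qed

lemma suffix_bounded_compose_unaligned:
  assumes "fundamental a" and "fundamental b" and "0 < r" and "r < length a" and "q < length b"
  shows "suffix_bounded (compose a b) (q * length a + r)"
proof -
  let ?m = "length a" and ?n = "length b" and ?w = "compose a b"
  let ?L = "length ?w - (q * ?m + r)"
  define \<sigma> \<beta> where "\<sigma> = letter b q" and "\<beta> = letter b (Suc q)"
  define h where "h = map ((\<noteq>) \<sigma>) (drop r (if \<sigma> = \<beta> then a else plus_word a))"
  have fa: "framed a" and fb: "framed b"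
    using assms(1,2) by (simp_all add: fundamental_framed)
  have len_w: "length ?w = ?n * ?m"
    using fa fb by (simp add: length_compose)
  obtain a' where a': "a = a' @ [False]"
    using framed_butlast[OF fa] by blast
  have h: "h = map ((\<noteq>) \<sigma>) (drop r (butlast a)) @ [\<beta>]"
    using assms(4) unfolding h_def a' by (auto simp: plus_word_def)
  have drop_i: "drop (q * ?m + r) ?w = h @ expand a (\<lambda>u. letter b (Suc q + u)) (?n - Suc q)"
    using drop_compose_inside_block[OF fa fb assms(4,5)] by (simp add: h \<sigma>_def \<beta>_def)
  consider "Suc q = ?n" | "Suc q < ?n"
    using assms(5) by linarith
  then show ?thesis
  proof cases
    case 1
    then have "drop (q * ?m + r) ?w = h" and "\<not> \<beta>"
      using drop_i fb by (simp_all add: expand_def \<beta>_def framed_iff_letter)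
    moreover have "?L = ?m - r"
      using len_w by (simp flip: 1)
    then have "take ?L ?w = take (?m - r) a"
      using fa assms(3,4) by (simp add: take_compose plus_word_def take_butlast)
    ultimately show ?thesis
      using fundamental_rotation_bounds(3)[OF assms(1,3,4)] 1 len_w
      by (simp add: suffix_bounded_def h_def)
  next
    case 2
    then have "?n - Suc q = Suc (?n - Suc (Suc q))"
      by simp
    then have "take ?m (drop (q * ?m + r) ?w) = h @ map ((\<noteq>) \<beta>) (take r a)"
      using drop_i fa assms(4) h
      by (simp add: expand_Suc \<beta>_def take_butlast take_map min_def)
    moreover have "Suc (Suc q) * ?m \<le> ?n * ?m"
      using 2 by (intro mult_le_mono1) simp
    then have "take ?m (take ?L ?w) = plus_word a"
      using fa assms(4) len_w by (simp add: take_compose min_def length_plus_word framed_def)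
    ultimately show ?thesis
      using fundamental_rotation_bounds(1,2)[OF assms(1,3,4)] len_w
        less_if_take_less[of "map Not (take ?L ?w)" "drop (q * ?m + r) ?w" ?m]
        less_if_take_less[of "drop (q * ?m + r) ?w" "take ?L ?w" ?m]
      by (simp add: suffix_bounded_def h_def take_map)
  qed
qed

lemma fundamental_compose:
  assumes "fundamental a" and "fundamental b"
  shows "fundamental (compose a b)"
proof -
  let ?m = "length a" and ?n = "length b"
  have fa: "framed a" and fb: "framed b"
    using assms by (simp_all add: fundamental_framed)
  then have m: "2 \<le> ?m" and n: "2 \<le> ?n"
    by (simp_all add: framed_length)
  have "suffix_bounded (compose a b) i" if "0 < i" and "i < ?m * ?n" for i
  proof -
    have q: "i div ?m < ?n"
      using that(2) by (simp add: less_mult_imp_div_less mult.commute)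
    show ?thesis
    proof (cases "i mod ?m = 0")
      case True
      then have i: "i div ?m * ?m = i"
        using div_mult_mod_eq[of i ?m] by simp
      with that(1) have "0 < i div ?m"
        by (cases "i div ?m") auto
      then have "suffix_bounded (compose a b) (i div ?m * ?m)"
        by (rule suffix_bounded_compose_aligned[OF assms _ q])
      then show ?thesis
        by (simp only: i)
    next
      case False
      have "0 < i mod ?m"
        using False by simp
      moreover have "i mod ?m < ?m"
        using m by (intro mod_less_divisor) linarith
      ultimately have "suffix_bounded (compose a b) (i div ?m * ?m + i mod ?m)"
        by (rule suffix_bounded_compose_unaligned[OF assms _ _ q])
      then show ?thesis
        by simp
    qed
  qed
  moreover have "2 \<le> ?m * ?n"
    using mult_le_mono[OF m, of 1 ?n] n by simp
  ultimately show ?thesis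
    using fa fb by (simp add: fundamental_iff_suffix_bounded length_compose)
qed

lemma fundamental_10: "fundamental [True, False]"
  by (auto simp: fundamental_iff_suffix_bounded suffix_bounded_def less_Suc_eq)

lemma fundamental_110: "fundamental [True, True, False]"
  by (auto simp: fundamental_iff_suffix_bounded suffix_bounded_def less_Suc_eq numeral_3_eq_3)

theorem proposition2p11:
  shows "(\<forall>a\<in>A1. \<forall>b\<in>A1. compose a b \<in> A1)
       \<and> (\<forall>a\<in>A1. \<forall>b\<in>A1. \<forall>c\<in>A1. compose (compose a b) c = compose a (compose b c))
       \<and> (\<exists>a\<in>A1. \<exists>b\<in>A1. compose a b \<noteq> compose b a)"
proof (intro conjI)
  show "\<forall>a\<in>A1. \<forall>b\<in>A1. compose a b \<in> A1"
    by (simp add: A1_def fundamental_compose)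
  show "\<forall>a\<in>A1. \<forall>b\<in>A1. \<forall>c\<in>A1. compose (compose a b) c = compose a (compose b c)"
    by (simp add: A1_def compose_assoc fundamental_framed)
  have "[True, False] \<in> A1" and "[True, True, False] \<in> A1"
    by (simp_all add: A1_def fundamental_10 fundamental_110)
  moreover have "compose [True, False] [True, True, False] \<noteq> compose [True, True, False] [True, False]"
    by (simp add: compose_def plus_word_def refl_word_def)
  ultimately show "\<exists>a\<in>A1. \<exists>b\<in>A1. compose a b \<noteq> compose b a"
    by blast
qed

end
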